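(* Let $\mathbb{R}^n$ and $\mathbb{R}^m$ be equipped with arbitrary norms $\|\cdot\|$, with dual norms $\|\cdot\|_*$, and let $g:\mathbb{R}^n\to\mathbb{R}^m$, $y\in\mathbb{R}^m$, $\rho>0$, $L>0$, $\mu_0>0$. Let $B=\{x\in\mathbb{R}^n:\|x\|\le\rho\}$. Assume $g(0)=0$, $g$ is differentiable in $B$ with $\|g'(x^a)-g'(x^b)\|\le L\|x^a-x^b\|$ for all $x^a,x^b\in B$, and $\|g'(0)^T h\|_*\ge\mu_0\|h\|_*$ for all $h\in\mathbb{R}^m$. Let $r^*=\min\{\rho,\frac{\mu_0}{2L}\}$ and suppose $\|y\|\le(\mu_0-Lr^* )r^*$. Then there exists a solution $x^*$ of $g(x)=y$ with $\|x^*\|\le r^*$.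
   Context: For a vector $c$, the dual norm is $\|c\|_*=\sup_{\|x\|=1}(c,x)$. The norm of $g'(x)$ is the operator norm subordinate to the chosen vector norms. *)

theory Defs
  imports "HOL-Analysis.Analysis"
begin

definition is_norm :: "('a::real_vector \<Rightarrow> real) \<Rightarrow> bool" where
  "is_norm N \<longleftrightarrow> (\<forall>x. 0 \<le> N x) \<and> (\<forall>x. N x = 0 \<longleftrightarrow> x = 0)
     \<and> (\<forall>a x. N (a *\<^sub>R x) = \<bar>a\<bar> * N x) \<and> (\<forall>x y. N (x + y) \<le> N x + N y)"

definition dual_norm :: "('a::real_inner \<Rightarrow> real) \<Rightarrow> 'a \<Rightarrow> real" where
  "dual_norm N c = Sup {c \<bullet> x | x. N x = 1}"

definition op_norm :: "('a::real_vector \<Rightarrow> real) \<Rightarrow> ('b \<Rightarrow> real) \<Rightarrow> ('a \<Rightarrow> 'b) \<Rightarrow> real" where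
  "op_norm Nx Ny A = Sup {Ny (A x) | x. Nx x = 1}"

end

theory Submission
  imports Defs
begin

text \<open>Separating points from the convex compact image
  A({Nx \<le> 1}) of A = g'(0) turns the dual estimate on the transpose of A into a bounded right
  inverse: every z has a preimage of norm at most Ny z / \<mu>0. On the ball of radius r the Lipschitz
  bound on g' makes g - A Lipschitz with constant \<delta> = L r \<le> \<mu>0 / 2 (mean value inequality, via
  supporting functionals of Ny). The iteration x_{k+1} = x_k + P (y - g x_k), with P a right
  inverse of that size, therefore shrinks the residual by the factor \<delta> / \<mu>0 in each step, stays
  in the ball of radius Ny y / (\<mu>0 - \<delta>) \<le> r, and converges to a solution.\<close>

lemma is_norm_zero: "is_norm N \<Longrightarrow> N 0 = 0"
  by (simp add: is_norm_def)

lemma is_norm_nonneg: "is_norm N \<Longrightarrow> 0 \<le> N x"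
  by (simp add: is_norm_def)

lemma is_norm_pos: "is_norm N \<Longrightarrow> x \<noteq> 0 \<Longrightarrow> 0 < N x"
  unfolding is_norm_def by (metis order_le_less)

lemma is_norm_scaleR: "is_norm N \<Longrightarrow> N (a *\<^sub>R x) = \<bar>a\<bar> * N x"
  by (simp add: is_norm_def)

lemma is_norm_triangle: "is_norm N \<Longrightarrow> N (x + y) \<le> N x + N y"
  by (simp add: is_norm_def)

lemma is_norm_minus: "is_norm N \<Longrightarrow> N (- x) = N x"
  using is_norm_scaleR[of N "-1" x] by simp

lemma is_norm_normalize: "is_norm N \<Longrightarrow> x \<noteq> 0 \<Longrightarrow> N ((1 / N x) *\<^sub>R x) = 1"
  using is_norm_pos[of N x] by (simp add: is_norm_scaleR)

lemma is_norm_abs: "is_norm (abs :: real \<Rightarrow> real)"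
  by (auto simp: is_norm_def abs_mult abs_triangle_ineq)

lemma is_norm_sum: "is_norm N \<Longrightarrow> N (\<Sum>i\<in>S. f i) \<le> (\<Sum>i\<in>S. N (f i))"
proof (induction S rule: infinite_finite_induct)
  case (insert x F)
  then show ?case using is_norm_triangle[of N "f x" "sum f F"] by simp
qed (simp_all add: is_norm_zero)

lemma convex_is_norm_cball: "is_norm N \<Longrightarrow> convex {z. N z \<le> c}"
proof (unfold convex_def, clarify)
  fix x y :: 'a and u v :: real
  assume N: "is_norm N" and h: "N x \<le> c" "N y \<le> c" "0 \<le> u" "0 \<le> v" "u + v = 1"
  have "N (u *\<^sub>R x + v *\<^sub>R y) \<le> u * N x + v * N y"
    using is_norm_triangle[OF N, of "u *\<^sub>R x" "v *\<^sub>R y"] h by (simp add: is_norm_scaleR[OF N])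
  also have "\<dots> \<le> u * c + v * c" using h by (intro add_mono mult_left_mono)
  finally show "N (u *\<^sub>R x + v *\<^sub>R y) \<le> c" using h(5) by (simp add: distrib_right[symmetric])
qed

lemma is_norm_le_const_norm:
  fixes N :: "'a::euclidean_space \<Rightarrow> real"
  assumes N: "is_norm N"
  shows "\<exists>C>0. \<forall>x. N x \<le> C * norm x"
proof (intro exI conjI allI)
  define C where "C = (\<Sum>b\<in>Basis. N b) + 1"
  have "0 \<le> (\<Sum>b\<in>Basis. N b)" by (simp add: sum_nonneg is_norm_nonneg[OF N])
  then show "C > 0" by (simp add: C_def)
  fix x :: 'a
  have "N x = N (\<Sum>b\<in>Basis. (x \<bullet> b) *\<^sub>R b)" by (simp add: euclidean_representation)
  also have "\<dots> \<le> (\<Sum>b\<in>Basis. \<bar>x \<bullet> b\<bar> * N b)"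
    using is_norm_sum[OF N, of "\<lambda>b. (x \<bullet> b) *\<^sub>R b" Basis] by (simp add: is_norm_scaleR[OF N])
  also have "\<dots> \<le> (\<Sum>b\<in>Basis. norm x * N b)"
    by (intro sum_mono mult_right_mono) (auto simp: Basis_le_norm is_norm_nonneg[OF N])
  also have "\<dots> \<le> C * norm x" by (simp add: C_def sum_distrib_left algebra_simps)
  finally show "N x \<le> C * norm x" .
qed

lemma is_norm_continuous_on:
  fixes N :: "'a::euclidean_space \<Rightarrow> real"
  assumes N: "is_norm N"
  shows "continuous_on S N"
proof -
  obtain C where C: "C > 0" "\<And>x. N x \<le> C * norm x" using is_norm_le_const_norm[OF N] by blast
  have "N x \<le> N y + C * dist x y" for x y
    using is_norm_triangle[OF N, of "x - y" y] C(2)[of "x - y"] by (simp add: dist_norm)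
  then have "\<bar>N x - N y\<bar> \<le> C * dist x y" for x y
    by (metis abs_le_iff add.commute diff_le_eq dist_commute minus_diff_eq)
  then have "C-lipschitz_on S N"
    by (intro lipschitz_onI) (auto simp: dist_real_def less_imp_le[OF C(1)])
  then show ?thesis by (rule lipschitz_on_continuous_on)
qed

lemma is_norm_ge_const_norm:
  fixes N :: "'a::euclidean_space \<Rightarrow> real"
  assumes N: "is_norm N"
  shows "\<exists>c>0. \<forall>x. c * norm x \<le> N x"
proof -
  have "sphere (0::'a) 1 \<noteq> {}" by (simp add: sphere_def) (metis norm_Basis nonempty_Basis ex_in_conv)
  then obtain u where "u \<in> sphere 0 1" "\<forall>x\<in>sphere 0 1. N u \<le> N x"
    using continuous_attains_inf[OF compact_sphere _ is_norm_continuous_on[OF N]] by blast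
  then have u: "norm u = 1" "\<And>x. norm x = 1 \<Longrightarrow> N u \<le> N x" by auto
  have "N u * norm x \<le> N x" for x
  proof (cases "x = 0")
    case False
    have "N u \<le> N ((1 / norm x) *\<^sub>R x)" using u(2) False by simp
    then show ?thesis using False by (simp add: is_norm_scaleR[OF N] field_simps)
  qed (simp add: is_norm_zero[OF N])
  moreover have "N u > 0" using u(1) is_norm_pos[OF N, of u] by (metis norm_zero zero_neq_one)
  ultimately show ?thesis by blast
qed

lemma is_norm_unit_exists:
  fixes N :: "'a::euclidean_space \<Rightarrow> real"
  shows "is_norm N \<Longrightarrow> \<exists>u. N u = 1"
  using is_norm_normalize[of N] nonempty_Basis by (metis ex_in_conv zero_not_in_Basis)

lemma linear_is_norm_bounded:
  fixes Nx :: "'a::euclidean_space \<Rightarrow> real" and Ny :: "'b::euclidean_space \<Rightarrow> real"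
  assumes Nx: "is_norm Nx" and Ny: "is_norm Ny" and "linear A"
  shows "\<exists>K. \<forall>x. Ny (A x) \<le> K * Nx x"
proof -
  obtain c where c: "c > 0" "\<And>x. c * norm x \<le> Nx x" using is_norm_ge_const_norm[OF Nx] by blast
  obtain C where C: "C > 0" "\<And>x. Ny x \<le> C * norm x" using is_norm_le_const_norm[OF Ny] by blast
  obtain K where K: "\<And>x. norm (A x) \<le> K * norm x" using linear_bounded[OF \<open>linear A\<close>] by blast
  have "Ny (A x) \<le> (C * \<bar>K\<bar> / c) * Nx x" for x
  proof -
    have "norm (A x) \<le> \<bar>K\<bar> * norm x"
      using K[of x] abs_ge_self[of K] norm_ge_zero[of x] by (meson mult_right_mono order_trans)
    then have "Ny (A x) \<le> C * (\<bar>K\<bar> * norm x)"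
      using C by (meson less_imp_le mult_left_mono order_trans)
    also have "\<dots> \<le> C * (\<bar>K\<bar> * (Nx x / c))"
      using c C(1) by (intro mult_left_mono) (auto simp: field_simps mult.commute)
    finally show ?thesis by simp
  qed
  then show ?thesis by blast
qed

text \<open>Both the dual norm and the operator norm are suprema of a positively homogeneous
  function over the unit sphere; this is the estimate they share.\<close>
lemma le_Sup_unit_sphere_mult:
  fixes N :: "'a::real_vector \<Rightarrow> real"
  assumes N: "is_norm N" and bound: "\<And>x. F x \<le> K * N x"
    and homogeneous: "\<And>a x. 0 < a \<Longrightarrow> F (a *\<^sub>R x) = a * F x"
  shows "F x \<le> Sup {F u | u. N u = 1} * N x"
proof (cases "x = 0")
  case True
  then show ?thesis using bound[of 0] by (simp add: is_norm_zero[OF N])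
next
  case False
  have "bdd_above {F u | u. N u = 1}"
  proof (rule bdd_aboveI)
    fix v assume "v \<in> {F u | u. N u = 1}"
    then obtain u where "v = F u" "N u = 1" by blast
    with bound[of u] show "v \<le> K" by simp
  qed
  then have "F ((1 / N x) *\<^sub>R x) \<le> Sup {F u | u. N u = 1}"
    using is_norm_normalize[OF N False] by (intro cSup_upper) blast
  then show ?thesis
    using is_norm_pos[OF N False] by (simp add: homogeneous field_simps)
qed

lemma inner_le_dual_norm:
  fixes N :: "'a::euclidean_space \<Rightarrow> real"
  assumes N: "is_norm N"
  shows "c \<bullet> x \<le> dual_norm N c * N x"
proof -
  obtain K where "\<And>x. \<bar>c \<bullet> x\<bar> \<le> K * N x"
    using linear_is_norm_bounded[OF N is_norm_abs, of "\<lambda>x. c \<bullet> x"] bounded_linear_inner_right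
    by (metis bounded_linear.linear)
  then show ?thesis unfolding dual_norm_def
    by (intro le_Sup_unit_sphere_mult[OF N]) (auto intro: order_trans[OF abs_ge_self])
qed

lemma dual_norm_le:
  fixes N :: "'a::euclidean_space \<Rightarrow> real"
  assumes "is_norm N" "\<And>u. N u = 1 \<Longrightarrow> c \<bullet> u \<le> M"
  shows "dual_norm N c \<le> M"
  unfolding dual_norm_def using is_norm_unit_exists[OF assms(1)] assms(2)
  by (intro cSup_least) auto

lemma op_norm_le:
  fixes Nx :: "'a::euclidean_space \<Rightarrow> real" and Ny :: "'b::euclidean_space \<Rightarrow> real"
  assumes Nx: "is_norm Nx" and Ny: "is_norm Ny" and A: "linear A"
  shows "Ny (A x) \<le> op_norm Nx Ny A * Nx x"
  unfolding op_norm_def using linear_is_norm_bounded[OF Nx Ny A]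
  by (elim exE, intro le_Sup_unit_sphere_mult[OF Nx])
    (auto simp: linear_scale[OF A] is_norm_scaleR[OF Ny])

lemma convex_is_norm_ball:
  assumes N: "is_norm N"
  shows "convex {z. N z < 1}"
proof (unfold convex_def, clarify)
  fix x y :: 'a and u v :: real
  assume h: "N x < 1" "N y < 1" "0 \<le> u" "0 \<le> v" "u + v = 1"
  have "N (u *\<^sub>R x + v *\<^sub>R y) \<le> u * N x + v * N y"
    using is_norm_triangle[OF N, of "u *\<^sub>R x" "v *\<^sub>R y"] h by (simp add: is_norm_scaleR[OF N])
  also have "\<dots> < 1"
  proof (cases "u = 0")
    case False
    then have "u * N x < u" using h by simp
    moreover have "v * N y \<le> v" using h by (simp add: mult_left_le)
    ultimately show ?thesis using h(5) by linarith
  qed (use h in simp)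
  finally show "N (u *\<^sub>R x + v *\<^sub>R y) < 1" .
qed

lemma is_norm_unit_in_closure_ball:
  fixes N :: "'a::euclidean_space \<Rightarrow> real"
  assumes N: "is_norm N" and u: "N u = 1"
  shows "u \<in> closure {z. N z < 1}"
proof -
  have "u \<noteq> 0" using u is_norm_zero[OF N] by auto
  have "open_segment 0 u \<subseteq> {z. N z < 1}"
    using u by (auto simp: in_segment is_norm_scaleR[OF N])
  then have "closure (open_segment 0 u) \<subseteq> closure {z. N z < 1}" by (rule closure_mono)
  then show ?thesis using \<open>u \<noteq> 0\<close> by auto
qed

text \<open>The finite-dimensional Hahn--Banach theorem: a functional of dual norm at most one that is
  exact at w, obtained from a hyperplane supporting the unit ball at the normalization of w.\<close>
lemma is_norm_supporting_functional:
  fixes N :: "'a::euclidean_space \<Rightarrow> real"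
  assumes N: "is_norm N"
  shows "\<exists>k. k \<bullet> w = N w \<and> (\<forall>z. k \<bullet> z \<le> N z)"
proof (cases "w = 0")
  case True
  then show ?thesis by (intro exI[of _ 0]) (simp add: is_norm_zero[OF N] is_norm_nonneg[OF N])
next
  case False
  define S where "S = {z. N z < 1}"
  define w0 where "w0 = (1 / N w) *\<^sub>R w"
  have w0: "N w0 = 1" unfolding w0_def by (rule is_norm_normalize[OF N False])
  then have "w0 \<notin> rel_interior S" using rel_interior_subset by (force simp: S_def)
  moreover have "w0 \<in> closure S" unfolding S_def by (rule is_norm_unit_in_closure_ball[OF N w0])
  moreover have "convex S" unfolding S_def by (rule convex_is_norm_ball[OF N])
  ultimately obtain a where "a \<noteq> 0" and a: "\<And>y. y \<in> closure S \<Longrightarrow> a \<bullet> w0 \<le> a \<bullet> y"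
    using supporting_hyperplane_relative_frontier by blast
  define y0 where "y0 = (1 / (2 * N a)) *\<^sub>R a"
  have "N y0 < 1" using is_norm_pos[OF N \<open>a \<noteq> 0\<close>] by (simp add: y0_def is_norm_scaleR[OF N])
  then have "a \<bullet> w0 \<le> a \<bullet> (- y0)"
    by (intro a) (simp add: S_def is_norm_minus[OF N] closure_subset[THEN subsetD])
  moreover have "a \<bullet> y0 > 0" using is_norm_pos[OF N \<open>a \<noteq> 0\<close>] \<open>a \<noteq> 0\<close> by (simp add: y0_def)
  ultimately have pos: "(- a) \<bullet> w0 > 0" by simp
  define k where "k = (1 / ((- a) \<bullet> w0)) *\<^sub>R (- a)"
  have "k \<bullet> z \<le> N z" for z
  proof (cases "z = 0")
    case False
    have "a \<bullet> w0 \<le> a \<bullet> ((1 / N z) *\<^sub>R z)"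
      unfolding S_def by (intro a[unfolded S_def] is_norm_unit_in_closure_ball is_norm_normalize N False)
    then show ?thesis
      using pos is_norm_pos[OF N False] by (simp add: k_def field_simps)
  qed (simp add: is_norm_zero[OF N])
  moreover have "k \<bullet> w = N w"
    using pos is_norm_pos[OF N False] by (simp add: k_def w0_def field_simps)
  ultimately show ?thesis by blast
qed

lemma is_norm_mean_value_inequality:
  fixes Nx :: "'a::euclidean_space \<Rightarrow> real" and Ny :: "'b::euclidean_space \<Rightarrow> real"
  assumes Nx: "is_norm Nx" and Ny: "is_norm Ny" and "convex S"
    and deriv: "\<And>x. x \<in> S \<Longrightarrow> (F has_derivative F' x) (at x within S)"
    and bound: "\<And>x v. x \<in> S \<Longrightarrow> Ny (F' x v) \<le> \<delta> * Nx v"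
    and "a \<in> S" "b \<in> S"
  shows "Ny (F b - F a) \<le> \<delta> * Nx (b - a)"
proof -
  obtain k where k: "k \<bullet> (F b - F a) = Ny (F b - F a)" "\<And>z. k \<bullet> z \<le> Ny z"
    using is_norm_supporting_functional[OF Ny] by blast
  define p where "p t = a + t *\<^sub>R (b - a)" for t :: real
  have "p t = (1 - t) *\<^sub>R a + t *\<^sub>R b" for t by (simp add: p_def algebra_simps)
  then have pS: "p ` {0..1} \<subseteq> S" using convexD_alt[OF \<open>convex S\<close> \<open>a \<in> S\<close> \<open>b \<in> S\<close>] by auto
  have "((\<lambda>t. k \<bullet> F (p t)) has_derivative (\<lambda>s. k \<bullet> F' (p t) (s *\<^sub>R (b - a)))) (at t within {0..1})"
    if "0 \<le> t" "t \<le> 1" for t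
  proof -
    have "(p has_derivative (\<lambda>s. s *\<^sub>R (b - a))) (at t within {0..1})"
      unfolding p_def by (auto intro!: derivative_eq_intros)
    moreover have "p t \<in> S" using pS that by auto
    then have "(F has_derivative F' (p t)) (at (p t) within p ` {0..1})"
      using has_derivative_subset[OF deriv pS] by blast
    ultimately have "(F \<circ> p has_derivative F' (p t) \<circ> (\<lambda>s. s *\<^sub>R (b - a))) (at t within {0..1})"
      by (rule diff_chain_within)
    from has_derivative_inner_right[OF this, of k] show ?thesis by (simp add: o_def)
  qed
  from mvt_very_simple[of 0 1, OF _ this] obtain \<xi> where "\<xi> \<in> {0..1}"
    and \<xi>: "k \<bullet> F (p 1) - k \<bullet> F (p 0) = k \<bullet> F' (p \<xi>) (b - a)"
    by auto
  have "Ny (F b - F a) = k \<bullet> F' (p \<xi>) (b - a)" using k(1) \<xi> by (simp add: p_def inner_diff_right)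
  also have "\<dots> \<le> Ny (F' (p \<xi>) (b - a))" by (rule k(2))
  also have "\<dots> \<le> \<delta> * Nx (b - a)" using pS \<open>\<xi> \<in> {0..1}\<close> by (intro bound) auto
  finally show ?thesis .
qed

lemma compact_is_norm_cball:
  fixes N :: "'a::euclidean_space \<Rightarrow> real"
  assumes N: "is_norm N"
  shows "compact {z. N z \<le> c}"
proof -
  obtain c' where c': "c' > 0" "\<And>x. c' * norm x \<le> N x" using is_norm_ge_const_norm[OF N] by blast
  have "norm x \<le> c / c'" if "N x \<le> c" for x
    using c' order_trans[OF c'(2) that] by (simp add: field_simps mult.commute)
  then have "bounded {z. N z \<le> c}" unfolding bounded_iff by blast
  moreover have "closed {z. N z \<le> c}"
    by (rule closed_Collect_le[OF is_norm_continuous_on[OF N] continuous_on_const])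
  ultimately show ?thesis by (simp add: compact_eq_bounded_closed)
qed

lemma linear_inner_transpose:
  fixes A :: "real^'n \<Rightarrow> real^'m"
  assumes "linear A"
  shows "A u \<bullet> h = (transpose (matrix A) *v h) \<bullet> u"
proof -
  have "(transpose (matrix A) *v h) \<bullet> u = (h v* matrix A) \<bullet> u"
    by (simp only: transpose_matrix_vector)
  also have "\<dots> = h \<bullet> (matrix A *v u)" by (rule dot_lmul_matrix)
  also have "matrix A *v u = A u" using fun_cong[OF matrix_vector_mul(2)[OF assms]] by simp
  finally show ?thesis by (simp only: inner_commute)
qed

text \<open>The dual estimate says that the convex compact set A({Nx \<le> 1}) contains the
  Ny-ball of radius \<mu>: a point outside it would be strictly separated by a functional h
  with \<mu> * dual_norm Ny h < h \<bullet> w.\<close>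
lemma dual_transpose_bound_imp_preimage:
  fixes Nx :: "real^'n \<Rightarrow> real" and Ny :: "real^'m \<Rightarrow> real" and A :: "real^'n \<Rightarrow> real^'m"
  assumes Nx: "is_norm Nx" and Ny: "is_norm Ny" and A: "linear A" and "\<mu> > 0"
    and dual_bound: "\<And>h. \<mu> * dual_norm Ny h \<le> dual_norm Nx (transpose (matrix A) *v h)"
  shows "\<exists>v. A v = z \<and> \<mu> * Nx v \<le> Ny z"
proof (cases "z = 0")
  case True
  then show ?thesis using linear_0[OF A] by (intro exI[of _ 0]) (simp add: is_norm_zero[OF Nx] is_norm_zero[OF Ny])
next
  case False
  define S where "S = A ` {u. Nx u \<le> 1}"
  define w where "w = (\<mu> / Ny z) *\<^sub>R z"
  have Nw: "Ny w = \<mu>" using \<open>\<mu> > 0\<close> is_norm_pos[OF Ny False] by (simp add: w_def is_norm_scaleR[OF Ny])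
  have "w \<in> S"
  proof (rule ccontr)
    assume "w \<notin> S"
    moreover have "convex S" unfolding S_def by (intro convex_linear_image A convex_is_norm_cball Nx)
    moreover have "compact S" unfolding S_def using A linear_continuous_on linear_conv_bounded_linear
      by (blast intro: compact_continuous_image compact_is_norm_cball Nx)
    ultimately obtain a b where ab: "a \<bullet> w < b" "\<And>x. x \<in> S \<Longrightarrow> b < a \<bullet> x"
      using separating_hyperplane_closed_point compact_imp_closed by metis
    have "dual_norm Nx (transpose (matrix A) *v (- a)) \<le> - b"
    proof (rule dual_norm_le[OF Nx])
      fix u assume "Nx u = 1"
      then have "b < a \<bullet> A u" by (intro ab(2)) (simp add: S_def)
      then show "(transpose (matrix A) *v (- a)) \<bullet> u \<le> - b"
        using linear_inner_transpose[OF A, of u "- a"] by (simp add: inner_commute)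
    qed
    then have "\<mu> * dual_norm Ny (- a) < (- a) \<bullet> w" using dual_bound[of "- a"] ab(1) by simp
    also have "\<dots> \<le> dual_norm Ny (- a) * \<mu>" using inner_le_dual_norm[OF Ny, of "- a" w] Nw by simp
    finally show False by simp
  qed
  then obtain u where u: "Nx u \<le> 1" "A u = w" by (auto simp: S_def)
  show ?thesis
  proof (intro exI conjI)
    show "A ((Ny z / \<mu>) *\<^sub>R u) = z"
      using u(2) \<open>\<mu> > 0\<close> is_norm_pos[OF Ny False] by (simp add: linear_scale[OF A] w_def)
    show "\<mu> * Nx ((Ny z / \<mu>) *\<^sub>R u) \<le> Ny z"
      using u(1) \<open>\<mu> > 0\<close> is_norm_nonneg[OF Ny, of z]
      by (simp add: is_norm_scaleR[OF Nx] abs_of_nonneg mult_left_le)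
  qed
qed

lemma tendsto_zero_is_norm_bound:
  fixes N :: "'a::euclidean_space \<Rightarrow> real"
  assumes N: "is_norm N" and bound: "\<And>k. N (f k) \<le> b k" and "b \<longlonglongrightarrow> 0"
  shows "f \<longlonglongrightarrow> 0"
proof -
  obtain c where c: "c > 0" "\<And>x. c * norm x \<le> N x" using is_norm_ge_const_norm[OF N] by blast
  have "norm (f k) \<le> b k / c" for k
    using order_trans[OF c(2) bound] c(1) by (simp add: field_simps mult.commute)
  then show ?thesis
    by (intro Lim_null_comparison[OF _ tendsto_divide_zero[OF \<open>b \<longlonglongrightarrow> 0\<close>, of c]]) simp
qed

lemma is_norm_geometric_increments_convergent:
  fixes N :: "'a::euclidean_space \<Rightarrow> real" and x :: "nat \<Rightarrow> 'a"
  assumes N: "is_norm N" and bound: "\<And>k. N (x (Suc k) - x k) \<le> C * q ^ k"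
    and "0 \<le> q" "q < 1"
  shows "convergent x"
proof -
  obtain c where c: "c > 0" "\<And>x. c * norm x \<le> N x" using is_norm_ge_const_norm[OF N] by blast
  have "summable (\<lambda>k. q ^ k * (C / c))"
    using \<open>0 \<le> q\<close> \<open>q < 1\<close> by (intro summable_mult2 summable_geometric) simp
  moreover have "norm (x (Suc k) - x k) \<le> q ^ k * (C / c)" for k
    using order_trans[OF c(2) bound] c(1) by (simp add: field_simps mult.commute)
  ultimately have "summable (\<lambda>k. x (Suc k) - x k)" by (rule summable_comparison_test')
  then have "(\<lambda>n. x 0 + (\<Sum>k<n. x (Suc k) - x k)) \<longlonglongrightarrow> x 0 + (\<Sum>k. x (Suc k) - x k)"
    by (intro tendsto_add tendsto_const summable_LIMSEQ)
  then show ?thesis by (simp add: sum_lessThan_telescope convergentI)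
qed

lemma residual_after_linear_correction:
  assumes Ny: "is_norm Ny" and A: "linear A" and v: "A v = y - g x"
    and perturbation: "Ny ((g (x + v) - A (x + v)) - (g x - A x)) \<le> \<delta> * Nx v"
  shows "Ny (y - g (x + v)) \<le> \<delta> * Nx v"
proof -
  have "y - g (x + v) = - ((g (x + v) - A (x + v)) - (g x - A x))"
    using v by (simp add: linear_add[OF A] algebra_simps)
  then have "Ny (y - g (x + v)) = Ny ((g (x + v) - A (x + v)) - (g x - A x))"
    by (simp only: is_norm_minus[OF Ny])
  then show ?thesis using perturbation by simp
qed

lemma graves_radius_bound:
  fixes \<delta> \<mu> M r :: real
  assumes "0 \<le> \<delta>" "\<delta> < \<mu>" "0 \<le> M" "M \<le> (\<mu> - \<delta>) * r"
  shows "(1 - (\<delta> / \<mu>) ^ k) * (M / (\<mu> - \<delta>)) \<le> r"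
proof -
  have "0 \<le> (\<delta> / \<mu>) ^ k * (M / (\<mu> - \<delta>))" using assms(1-3) by simp
  moreover have "M / (\<mu> - \<delta>) \<le> r" using assms(2,4) by (simp add: divide_le_eq mult.commute)
  ultimately show ?thesis by (simp add: algebra_simps)
qed

text \<open>The iterates stay in the ball of radius R = Ny y / (\<mu> - \<delta>) \<le> r, since the k-th
  correction has norm at most q^k Ny y / \<mu> = q^k (1 - q) R with q = \<delta> / \<mu>.\<close>
lemma graves_step:
  assumes Nx: "is_norm Nx" and Ny: "is_norm Ny" and A: "linear A"
    and perturbation: "\<And>a b. Nx a \<le> r \<Longrightarrow> Nx b \<le> r \<Longrightarrow>
      Ny ((g b - A b) - (g a - A a)) \<le> \<delta> * Nx (b - a)"
    and "0 \<le> \<delta>" "\<delta> < \<mu>" "Ny y \<le> (\<mu> - \<delta>) * r"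
    and x: "Nx x \<le> (1 - (\<delta> / \<mu>) ^ k) * (Ny y / (\<mu> - \<delta>))" "Ny (y - g x) \<le> (\<delta> / \<mu>) ^ k * Ny y"
    and v: "A v = y - g x" "\<mu> * Nx v \<le> Ny (y - g x)"
  shows "Nx (x + v) \<le> (1 - (\<delta> / \<mu>) ^ Suc k) * (Ny y / (\<mu> - \<delta>))"
    and "Ny (y - g (x + v)) \<le> (\<delta> / \<mu>) ^ Suc k * Ny y"
proof -
  define q where "q = \<delta> / \<mu>"
  define R where "R = Ny y / (\<mu> - \<delta>)"
  have "0 \<le> q" using \<open>0 \<le> \<delta>\<close> \<open>\<delta> < \<mu>\<close> by (simp add: q_def)
  have "\<mu> * Nx v \<le> q ^ k * Ny y" using v(2) x(2) by (simp add: q_def)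
  then have "Nx v \<le> q ^ k * (Ny y / \<mu>)"
    using \<open>0 \<le> \<delta>\<close> \<open>\<delta> < \<mu>\<close> by (simp add: field_simps mult.commute)
  also have "Ny y / \<mu> = (1 - q) * R" using \<open>\<delta> < \<mu>\<close> \<open>0 \<le> \<delta>\<close> by (simp add: q_def R_def field_simps)
  finally have "Nx (x + v) \<le> (1 - q ^ k) * R + q ^ k * ((1 - q) * R)"
    using is_norm_triangle[OF Nx, of x v] x(1) by (simp add: q_def R_def)
  also have "\<dots> = (1 - q ^ Suc k) * R" by (simp add: algebra_simps)
  finally show bound: "Nx (x + v) \<le> (1 - (\<delta> / \<mu>) ^ Suc k) * (Ny y / (\<mu> - \<delta>))"
    by (simp only: q_def R_def)
  have "Nx x \<le> r" "Nx (x + v) \<le> r"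
    using x(1) bound graves_radius_bound[OF assms(5-6) is_norm_nonneg[OF Ny] assms(7)] by (meson order_trans)+
  then have "Ny ((g (x + v) - A (x + v)) - (g x - A x)) \<le> \<delta> * Nx (x + v - x)"
    by (rule perturbation)
  then have "Ny (y - g (x + v)) \<le> \<delta> * Nx v"
    using residual_after_linear_correction[OF Ny A, of v y g x \<delta> Nx] v(1) by simp
  also have "\<delta> * Nx v = q * (\<mu> * Nx v)" using \<open>0 \<le> \<delta>\<close> \<open>\<delta> < \<mu>\<close> by (simp add: q_def)
  also have "\<dots> \<le> q ^ Suc k * Ny y"
    using mult_left_mono[OF \<open>\<mu> * Nx v \<le> q ^ k * Ny y\<close> \<open>0 \<le> q\<close>] by simp
  finally show "Ny (y - g (x + v)) \<le> (\<delta> / \<mu>) ^ Suc k * Ny y" by (simp add: q_def)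
qed

lemma graves_iteration:
  assumes Nx: "is_norm Nx" and Ny: "is_norm Ny" and A: "linear A"
    and preimage: "\<And>z. \<exists>v. A v = z \<and> \<mu> * Nx v \<le> Ny z"
    and perturbation: "\<And>a b. Nx a \<le> r \<Longrightarrow> Nx b \<le> r \<Longrightarrow>
      Ny ((g b - A b) - (g a - A a)) \<le> \<delta> * Nx (b - a)"
    and "0 \<le> \<delta>" "\<delta> < \<mu>" "g 0 = 0" "Ny y \<le> (\<mu> - \<delta>) * r"
  obtains xs where "\<And>k. Nx (xs k) \<le> r"
    "\<And>k. Ny (y - g (xs k)) \<le> (\<delta> / \<mu>) ^ k * Ny y"
    "\<And>k. \<mu> * Nx (xs (Suc k) - xs k) \<le> (\<delta> / \<mu>) ^ k * Ny y"
proof -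
  obtain P where P: "\<And>z. A (P z) = z" "\<And>z. \<mu> * Nx (P z) \<le> Ny z" using preimage by metis
  define xs where "xs = rec_nat 0 (\<lambda>_ x. x + P (y - g x))"
  have xs: "xs 0 = 0" "\<And>k. xs (Suc k) = xs k + P (y - g (xs k))" by (simp_all add: xs_def)
  note step = graves_step[OF Nx Ny A perturbation assms(6,7,9) _ _ P(1) P(2)]
  have inv: "Nx (xs k) \<le> (1 - (\<delta> / \<mu>) ^ k) * (Ny y / (\<mu> - \<delta>))
    \<and> Ny (y - g (xs k)) \<le> (\<delta> / \<mu>) ^ k * Ny y" for k
  proof (induction k)
    case 0
    then show ?case by (simp add: xs \<open>g 0 = 0\<close> is_norm_zero[OF Nx])
  next
    case (Suc k)
    then show ?case using step[of "xs k" k] by (simp add: xs)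
  qed
  show ?thesis
  proof (rule that)
    show "Nx (xs k) \<le> r" for k
      using inv[of k] graves_radius_bound[OF assms(6,7) is_norm_nonneg[OF Ny] assms(9), of k] by linarith
    show "Ny (y - g (xs k)) \<le> (\<delta> / \<mu>) ^ k * Ny y" for k using inv by simp
    show "\<mu> * Nx (xs (Suc k) - xs k) \<le> (\<delta> / \<mu>) ^ k * Ny y" for k
      using order_trans[OF P(2) conjunct2[OF inv[of k]]] by (simp add: xs)
  qed
qed

lemma graves:
  fixes Nx :: "'a::euclidean_space \<Rightarrow> real" and Ny :: "'b::euclidean_space \<Rightarrow> real"
  assumes Nx: "is_norm Nx" and Ny: "is_norm Ny" and A: "linear A"
    and preimage: "\<And>z. \<exists>v. A v = z \<and> \<mu> * Nx v \<le> Ny z"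
    and cont: "continuous_on {x. Nx x \<le> r} g"
    and perturbation: "\<And>a b. Nx a \<le> r \<Longrightarrow> Nx b \<le> r \<Longrightarrow>
      Ny ((g b - A b) - (g a - A a)) \<le> \<delta> * Nx (b - a)"
    and "0 \<le> \<delta>" "\<delta> < \<mu>" "g 0 = 0" "Ny y \<le> (\<mu> - \<delta>) * r"
  shows "\<exists>x. g x = y \<and> Nx x \<le> r"
proof (rule graves_iteration[OF Nx Ny A preimage perturbation assms(7-10)])
  fix xs assume xs: "\<And>k. Nx (xs k) \<le> r" "\<And>k. Ny (y - g (xs k)) \<le> (\<delta> / \<mu>) ^ k * Ny y"
    "\<And>k. \<mu> * Nx (xs (Suc k) - xs k) \<le> (\<delta> / \<mu>) ^ k * Ny y"
  have q: "0 \<le> \<delta> / \<mu>" "\<delta> / \<mu> < 1" using \<open>0 \<le> \<delta>\<close> \<open>\<delta> < \<mu>\<close> by auto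
  have "convergent xs"
    using xs(3) \<open>\<delta> < \<mu>\<close> \<open>0 \<le> \<delta>\<close>
    by (intro is_norm_geometric_increments_convergent[OF Nx _ q, of _ "Ny y / \<mu>"]) (simp add: field_simps)
  then obtain x where lim: "xs \<longlonglongrightarrow> x" by (auto simp: convergent_def)
  have closed: "closed {x. Nx x \<le> r}"
    by (rule closed_Collect_le[OF is_norm_continuous_on[OF Nx] continuous_on_const])
  have "Nx x \<le> r" using closed_sequentially[OF closed _ lim] xs(1) by blast
  have "(\<lambda>k. y - g (xs k)) \<longlonglongrightarrow> y - g x"
    using continuous_on_tendsto_compose[OF cont lim] xs(1) \<open>Nx x \<le> r\<close> by (intro tendsto_diff) auto
  moreover have "(\<lambda>k. y - g (xs k)) \<longlonglongrightarrow> 0"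
    using q by (intro tendsto_zero_is_norm_bound[OF Ny xs(2)] tendsto_mult_left_zero LIMSEQ_power_zero) auto
  ultimately have "y - g x = 0" by (rule LIMSEQ_unique)
  then have "g x = y" by simp
  with \<open>Nx x \<le> r\<close> show ?thesis by blast
qed

lemma lipschitz_derivative_perturbation_bound:
  fixes Nx :: "'a::euclidean_space \<Rightarrow> real" and Ny :: "'b::euclidean_space \<Rightarrow> real"
  assumes Nx: "is_norm Nx" and Ny: "is_norm Ny"
    and deriv: "\<forall>x\<in>{x. Nx x \<le> \<rho>}. (g has_derivative g' x) (at x within {x. Nx x \<le> \<rho>})"
    and lip: "\<forall>xa\<in>{x. Nx x \<le> \<rho>}. \<forall>xb\<in>{x. Nx x \<le> \<rho>}.
      op_norm Nx Ny (\<lambda>v. g' xa v - g' xb v) \<le> L * Nx (xa - xb)"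
    and "0 \<le> L" "r \<le> \<rho>" "Nx a \<le> r" "Nx b \<le> r"
  shows "Ny ((g b - g' 0 b) - (g a - g' 0 a)) \<le> (L * r) * Nx (b - a)"
proof -
  define S where "S = {x. Nx x \<le> r}"
  have "S \<subseteq> {x. Nx x \<le> \<rho>}" using \<open>r \<le> \<rho>\<close> by (auto simp: S_def)
  have "0 \<in> S" using \<open>Nx a \<le> r\<close> is_norm_nonneg[OF Nx, of a] by (simp add: S_def is_norm_zero[OF Nx])
  have g_deriv: "(g has_derivative g' x) (at x within S)" and g'_linear: "linear (g' x)" if "x \<in> S" for x
  proof -
    have "(g has_derivative g' x) (at x within {x. Nx x \<le> \<rho>})"
      using deriv that \<open>S \<subseteq> {x. Nx x \<le> \<rho>}\<close> by blast
    then show "(g has_derivative g' x) (at x within S)" "linear (g' x)"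
      using \<open>S \<subseteq> {x. Nx x \<le> \<rho>}\<close> by (auto intro: has_derivative_subset has_derivative_linear)
  qed
  note lin0 = g'_linear[OF \<open>0 \<in> S\<close>]
  have derivative: "((\<lambda>x. g x - g' 0 x) has_derivative (\<lambda>v. g' x v - g' 0 v)) (at x within S)"
    if "x \<in> S" for x
    using g_deriv[OF that] lin0 by (intro has_derivative_diff linear_imp_has_derivative)
  have derivative_bound: "Ny (g' x v - g' 0 v) \<le> (L * r) * Nx v" if "x \<in> S" for x v
  proof -
    have "Ny (g' x v - g' 0 v) \<le> op_norm Nx Ny (\<lambda>v. g' x v - g' 0 v) * Nx v"
      using g'_linear[OF that] lin0 by (intro op_norm_le[OF Nx Ny] linear_compose_sub)
    also have "op_norm Nx Ny (\<lambda>v. g' x v - g' 0 v) \<le> L * Nx (x - 0)"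
      using lip \<open>0 \<in> S\<close> that \<open>S \<subseteq> {x. Nx x \<le> \<rho>}\<close> by blast
    also have "\<dots> \<le> L * r" using that \<open>0 \<le> L\<close> by (simp add: S_def mult_left_mono)
    finally show ?thesis by (simp add: is_norm_nonneg[OF Nx] mult_right_mono)
  qed
  have "Ny ((\<lambda>x. g x - g' 0 x) b - (\<lambda>x. g x - g' 0 x) a) \<le> (L * r) * Nx (b - a)"
    using \<open>Nx a \<le> r\<close> \<open>Nx b \<le> r\<close> unfolding S_def[symmetric]
    by (intro is_norm_mean_value_inequality[OF Nx Ny convex_is_norm_cball[OF Nx, of r, folded S_def]
      derivative derivative_bound]) (simp_all add: S_def)
  then show ?thesis by simp
qed

theorem corollary3:
  fixes Nx :: "real^'n \<Rightarrow> real" and Ny :: "real^'m \<Rightarrow> real"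
    and g :: "real^'n \<Rightarrow> real^'m" and g' :: "real^'n \<Rightarrow> real^'n \<Rightarrow> real^'m"
    and y :: "real^'m" and \<rho> L \<mu>0 :: real
  assumes "is_norm Nx" and "is_norm Ny"
    and "\<rho> > 0" and "L > 0" and "\<mu>0 > 0"
    and "g 0 = 0"
    and "\<forall>x\<in>{x. Nx x \<le> \<rho>}. (g has_derivative g' x) (at x within {x. Nx x \<le> \<rho>})"
    and "\<forall>xa\<in>{x. Nx x \<le> \<rho>}. \<forall>xb\<in>{x. Nx x \<le> \<rho>}.
           op_norm Nx Ny (\<lambda>v. g' xa v - g' xb v) \<le> L * Nx (xa - xb)"
    and "\<forall>h. dual_norm Nx (transpose (matrix (g' 0)) *v h) \<ge> \<mu>0 * dual_norm Ny h"
    and "Ny y \<le> (\<mu>0 - L * min \<rho> (\<mu>0 / (2 * L))) * min \<rho> (\<mu>0 / (2 * L))"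
  shows "\<exists>x. g x = y \<and> Nx x \<le> min \<rho> (\<mu>0 / (2 * L))"
proof -
  note Nx = assms(1) and Ny = assms(2) and deriv = assms(7)
  define r where "r = min \<rho> (\<mu>0 / (2 * L))"
  have "r \<le> \<rho>" by (simp add: r_def)
  have "L * r < \<mu>0"
    using \<open>L > 0\<close> \<open>\<mu>0 > 0\<close> mult_left_mono[of r "\<mu>0 / (2 * L)" L] by (simp add: r_def)
  have "Nx 0 \<le> \<rho>" using \<open>\<rho> > 0\<close> by (simp add: is_norm_zero[OF Nx])
  with deriv have lin0: "linear (g' 0)" by (auto intro: has_derivative_linear)
  have preimage: "\<exists>v. g' 0 v = z \<and> \<mu>0 * Nx v \<le> Ny z" for z
    using assms(5,9) by (intro dual_transpose_bound_imp_preimage[OF Nx Ny lin0]) auto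
  have "continuous_on {x. Nx x \<le> \<rho>} g"
    using deriv by (intro has_derivative_continuous_on[where f' = g']) blast
  then have cont: "continuous_on {x. Nx x \<le> r} g"
    by (rule continuous_on_subset) (use \<open>r \<le> \<rho>\<close> in auto)
  note perturbation = lipschitz_derivative_perturbation_bound[OF Nx Ny deriv assms(8)
      less_imp_le[OF \<open>L > 0\<close>] \<open>r \<le> \<rho>\<close>]
  have "0 \<le> L * r" using assms(3-5) by (auto simp: r_def)
  moreover have "Ny y \<le> (\<mu>0 - L * r) * r" using assms(10) by (simp add: r_def)
  ultimately have "\<exists>x. g x = y \<and> Nx x \<le> r"
    using graves[OF Nx Ny lin0 preimage cont perturbation _ \<open>L * r < \<mu>0\<close> \<open>g 0 = 0\<close>] by blast
  then show ?thesis by (simp add: r_def)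
qed

end
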